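(* Fix $\vartheta_1\in(0,\pi/2)$ and an integer $k\ge0$. Then $$\min_{\eta\in I_k}\Phi(\eta+\pi)\ \ge\ \min_{\eta\in I_k}\Phi(\eta)+\pi(1-\cos\vartheta_1).$$
   Context: For integers $k\ge0$ let $I_k=[\vartheta_1+k\pi,(k+1)\pi-\vartheta_1]$ (note $\eta\in I_k$ iff $\eta+\pi\in I_{k+1}$). For $\eta\in I_k$ set $\gamma(\eta)=\sqrt{1-\sin^2\vartheta_1/\sin^2\eta}$ and $$\Phi(\eta)=-\eta\,\gamma(\eta)+k\pi+\arccos\Big(\frac{\cos(\eta-k\pi)}{\cos\vartheta_1}\Big),\qquad\arccos\in[0,\pi].$$ *)

theory Defs
  imports "HOL-Analysis.Analysis"
begin

definition Ik :: "real \<Rightarrow> nat \<Rightarrow> real set" where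
  "Ik th1 k = {th1 + real k * pi .. (real k + 1) * pi - th1}"

definition gam :: "real \<Rightarrow> real \<Rightarrow> real" where
  "gam th1 eta = sqrt (1 - (sin th1)\<^sup>2 / (sin eta)\<^sup>2)"

text \<open>Phi on I_k; the index k is the one with eta in I_k (the I_k are disjoint).\<close>
definition Phi :: "real \<Rightarrow> nat \<Rightarrow> real \<Rightarrow> real" where
  "Phi th1 k eta = - eta * gam th1 eta + real k * pi
                   + arccos (cos (eta - real k * pi) / cos th1)"

end

theory Submission
  imports Defs
begin

text \<open>Since \<open>\<gamma>\<close> is \<open>\<pi>\<close>-periodic, the definition of \<open>\<Phi>\<close> gives
  \<open>\<Phi>(\<eta> + \<pi>) = \<Phi>(\<eta>) + \<pi>(1 - \<gamma>(\<eta>))\<close> for \<open>\<eta> \<in> I\<^sub>k\<close>, and \<open>\<gamma>(\<eta>) \<le> cos \<vartheta>\<^sub>1\<close> because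
  \<open>sin\<^sup>2 \<eta> \<le> 1\<close>. So pointwise \<open>\<Phi>(\<eta> + \<pi>) \<ge> \<Phi>(\<eta>) + \<pi>(1 - cos \<vartheta>\<^sub>1)\<close>, and the
  inequality passes to the infima.\<close>

lemma sin_nonzero_between_multiples_pi:
  fixes eta :: real and k :: int
  assumes "of_int k * pi < eta" "eta < (of_int k + 1) * pi"
  shows "sin eta \<noteq> 0"
proof
  assume "sin eta = 0"
  then obtain n :: int where n: "eta = of_int n * pi" using sin_zero_iff_int2 by blast
  have "of_int k < (of_int n :: real)" "of_int n < (of_int k + 1 :: real)"
    using assms n by (simp_all add: mult_less_cancel_right)
  hence "k < n" "n < k + 1" by linarith+
  thus False by linarith
qed

lemma gam_le_abs_cos:
  assumes "sin eta \<noteq> 0"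
  shows "gam th1 eta \<le> \<bar>cos th1\<bar>"
proof -
  have "(sin eta)\<^sup>2 \<le> 1" by (simp add: abs_square_le_1)
  hence "(sin th1)\<^sup>2 \<le> (sin th1)\<^sup>2 / (sin eta)\<^sup>2"
    using assms by (simp add: le_divide_eq mult_left_le)
  hence "1 - (sin th1)\<^sup>2 / (sin eta)\<^sup>2 \<le> (cos th1)\<^sup>2"
    by (simp add: cos_squared_eq)
  thus ?thesis unfolding gam_def by (metis real_sqrt_abs real_sqrt_le_mono)
qed

lemma gam_add_pi: "gam th1 (eta + pi) = gam th1 eta"
  unfolding gam_def by simp

lemma Phi_Suc_add_pi:
  "Phi th1 (k + 1) (eta + pi) = Phi th1 k eta + pi * (1 - gam th1 eta)"
proof -
  have "eta + pi - real (k + 1) * pi = eta - real k * pi" by (simp add: algebra_simps)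
  then show ?thesis unfolding Phi_def gam_add_pi by (simp add: algebra_simps)
qed

lemma gam_le_cos_on_Ik:
  assumes "0 < th1" "th1 < pi / 2" "eta \<in> Ik th1 k"
  shows "gam th1 eta \<le> cos th1"
proof -
  have "of_int (int k) * pi < eta" "eta < (of_int (int k) + 1) * pi"
    using assms unfolding Ik_def by auto
  hence "gam th1 eta \<le> \<bar>cos th1\<bar>"
    by (intro gam_le_abs_cos sin_nonzero_between_multiples_pi)
  moreover have "0 < cos th1" using assms by (intro cos_gt_zero) auto
  ultimately show ?thesis by simp
qed

lemma abs_cos_le_cos:
  assumes "0 \<le> th1" "th1 \<le> u" "u \<le> pi - th1"
  shows "\<bar>cos u\<bar> \<le> cos th1"
proof -
  have "cos u \<le> cos th1" using assms by (intro cos_monotone_0_pi_le) auto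
  moreover have "cos (pi - th1) \<le> cos u" using assms by (intro cos_monotone_0_pi_le) auto
  ultimately show ?thesis by simp
qed

text \<open>Needed because \<open>Inf\<close> of a set unbounded below is a junk value.\<close>

lemma Phi_lower_bound:
  assumes "0 < th1" "th1 < pi / 2" "eta \<in> Ik th1 k"
  shows "- pi \<le> Phi th1 k eta"
proof -
  let ?u = "eta - real k * pi"
  have u: "th1 \<le> ?u" "?u \<le> pi - th1" "eta \<le> (real k + 1) * pi"
    using assms unfolding Ik_def by (auto simp: algebra_simps)
  have eta_nonneg: "0 \<le> eta"
    using u(1) assms(1) by (smt (verit) of_nat_0_le_iff pi_ge_zero zero_le_mult_iff)
  have cos_pos: "0 < cos th1" using assms by (intro cos_gt_zero) auto
  have "gam th1 eta \<le> 1"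
    using gam_le_cos_on_Ik[OF assms] cos_le_one[of th1] by linarith
  hence "eta * gam th1 eta \<le> eta" using eta_nonneg by (simp add: mult_left_le)
  moreover have "0 \<le> arccos (cos ?u / cos th1)"
    using abs_cos_le_cos[of th1 ?u] u assms cos_pos
    by (intro arccos_lbound) (auto simp: divide_simps)
  ultimately show ?thesis using u(3) unfolding Phi_def by (simp add: algebra_simps)
qed

lemma cInf_image_add_le:
  fixes f g :: "'a \<Rightarrow> real"
  assumes "S \<noteq> {}" "bdd_below (f ` S)" "\<And>x. x \<in> S \<Longrightarrow> f x + c \<le> g x"
  shows "Inf (f ` S) + c \<le> Inf (g ` S)"
proof (rule cInf_greatest)
  show "g ` S \<noteq> {}" using assms(1) by simp
next
  fix y assume "y \<in> g ` S"
  then obtain x where "x \<in> S" "y = g x" by auto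
  moreover have "Inf (f ` S) \<le> f x" using assms(2) \<open>x \<in> S\<close> by (intro cInf_lower) auto
  ultimately show "Inf (f ` S) + c \<le> y" using assms(3) by fastforce
qed

theorem lemma5p24:
  fixes th1 :: real and k :: nat
  assumes "0 < th1" and "th1 < pi / 2"
  shows "Inf ((\<lambda>eta. Phi th1 (k + 1) (eta + pi)) ` Ik th1 k)
           \<ge> Inf (Phi th1 k ` Ik th1 k) + pi * (1 - cos th1)"
proof (rule cInf_image_add_le)
  show "Ik th1 k \<noteq> {}" using assms unfolding Ik_def by (auto simp: algebra_simps)
  show "bdd_below (Phi th1 k ` Ik th1 k)"
    using Phi_lower_bound[OF assms] by (intro bdd_belowI2)
next
  fix eta assume "eta \<in> Ik th1 k"
  with assms have "gam th1 eta \<le> cos th1" by (rule gam_le_cos_on_Ik)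
  then show "Phi th1 k eta + pi * (1 - cos th1) \<le> Phi th1 (k + 1) (eta + pi)"
    unfolding Phi_Suc_add_pi by simp
qed

end
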